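(* For all integers $0\le r\le n$, \[ \log s(n,r) \le \frac{1}{n-r+1}\binom{n}{r}\log(n-r+2). \]
   Context: $s(n,r)$ denotes the number of sparse paving matroids of rank $r$ on the ground set $[n]=\{1,\dots,n\}$. A matroid of rank $r$ is sparse paving if every $r$-subset of the ground set is either a basis or a circuit-hyperplane (equivalently, the matroid and its dual are both paving, where paving means every circuit has at least $r$ elements). $\log$ is the logarithm to base $2$. *)

theory Defs
  imports Complex_Main
begin

definition matroid_bases :: "'a set \<Rightarrow> 'a set set \<Rightarrow> bool" where
  "matroid_bases E \<B> \<longleftrightarrow> finite E \<and> \<B> \<subseteq> Pow E \<and> \<B> \<noteq> {} \<and>
     (\<forall>B1\<in>\<B>. \<forall>B2\<in>\<B>. \<forall>x\<in>B1 - B2. \<exists>y\<in>B2 - B1. insert y (B1 - {x}) \<in> \<B>)"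

definition indep :: "'a set set \<Rightarrow> 'a set \<Rightarrow> bool" where
  "indep \<B> X \<longleftrightarrow> (\<exists>B\<in>\<B>. X \<subseteq> B)"

definition circuit :: "'a set \<Rightarrow> 'a set set \<Rightarrow> 'a set \<Rightarrow> bool" where
  "circuit E \<B> C \<longleftrightarrow> C \<subseteq> E \<and> \<not> indep \<B> C \<and> (\<forall>D. D \<subset> C \<longrightarrow> indep \<B> D)"

definition mrank :: "'a set set \<Rightarrow> 'a set \<Rightarrow> nat" where
  "mrank \<B> X = Max {card I | I. I \<subseteq> X \<and> indep \<B> I}"

definition flat :: "'a set \<Rightarrow> 'a set set \<Rightarrow> 'a set \<Rightarrow> bool" where
  "flat E \<B> F \<longleftrightarrow> F \<subseteq> E \<and> (\<forall>e\<in>E - F. mrank \<B> (insert e F) > mrank \<B> F)"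

definition hyperplane :: "'a set \<Rightarrow> 'a set set \<Rightarrow> 'a set \<Rightarrow> bool" where
  "hyperplane E \<B> H \<longleftrightarrow> flat E \<B> H \<and> mrank \<B> H + 1 = mrank \<B> E"

definition sparse_paving :: "'a set \<Rightarrow> nat \<Rightarrow> 'a set set \<Rightarrow> bool" where
  "sparse_paving E r \<B> \<longleftrightarrow>
     (\<forall>X. X \<subseteq> E \<and> card X = r \<longrightarrow> X \<in> \<B> \<or> (circuit E \<B> X \<and> hyperplane E \<B> X))"

definition s :: "nat \<Rightarrow> nat \<Rightarrow> nat" where
  "s n r = card {\<B>. matroid_bases {1..n} \<B> \<and> (\<forall>B\<in>\<B>. card B = r) \<and> sparse_paving {1..n} r \<B>}"

end

theory Submission
  imports Defs "HOL-Analysis.Convex"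
begin

text \<open>
  A sparse paving matroid of rank r on E is determined by its family of non-bases, a family
  of r-subsets no two of which share an (r-1)-subset (they are circuit-hyperplanes).
  Cover the r-subsets by the stars G(Y) of all r-subsets containing a fixed (r-1)-set Y;
  every r-set lies in exactly r stars, and the family of non-bases meets each star in at most
  one set, so its trace on a star takes at most |E - Y| + 1 = n - r + 2 values.
  Shearer's lemma then gives s(n,r)^r \<le> (n - r + 2)^C(n,r-1), and
  r C(n,r) = (n - r + 1) C(n,r-1) turns this into the stated bound.
  Shearer's lemma is proved by induction on the ground set, the induction step resting on
  the superadditivity of the geometric mean.
\<close>

section \<open>Superadditivity of the geometric mean\<close>

lemma root_prod_le_mean:
  fixes x :: "'a \<Rightarrow> real"
  assumes "finite I" "I \<noteq> {}" "\<And>i. i \<in> I \<Longrightarrow> 0 \<le> x i"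
  shows "root (card I) (\<Prod>i\<in>I. x i) \<le> (\<Sum>i\<in>I. x i) / card I"
proof -
  have "card I > 0" using assms by (simp add: card_gt_0_iff)
  moreover have "(\<Prod>i\<in>I. x i) \<ge> 0" using assms by (simp add: prod_nonneg)
  ultimately have "root (card I) (\<Prod>i\<in>I. x i) = (\<Prod>i\<in>I. x i) powr (1 / card I)"
    by (simp add: root_powr_inverse)
  also have "\<dots> \<le> (\<Sum>i\<in>I. x i / card I)" using arith_geom_mean[OF assms] .
  finally show ?thesis by (simp add: sum_divide_distrib)
qed

lemma root_prod_add_ge:
  fixes x y :: "'a \<Rightarrow> real"
  assumes fin: "finite I" and ne: "I \<noteq> {}"
    and x: "\<And>i. i \<in> I \<Longrightarrow> 0 \<le> x i" and y: "\<And>i. i \<in> I \<Longrightarrow> 0 \<le> y i"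
  shows "root (card I) (\<Prod>i\<in>I. x i) + root (card I) (\<Prod>i\<in>I. y i)
           \<le> root (card I) (\<Prod>i\<in>I. x i + y i)"
proof (cases "\<exists>i\<in>I. x i + y i = 0")
  case True
  then obtain i where "i \<in> I" "x i = 0" "y i = 0" using x y by force
  hence "(\<Prod>i\<in>I. x i) = 0" "(\<Prod>i\<in>I. y i) = 0" using fin by (auto intro: prod_zero)
  thus ?thesis using x y by (simp add: real_root_ge_zero prod_nonneg add_nonneg_nonneg)
next
  case False
  define t where "t i = x i + y i" for i
  have t: "t i > 0" if "i \<in> I" for i using False x[OF that] y[OF that] that by (force simp: t_def)
  hence t_ne: "t i \<noteq> 0" if "i \<in> I" for i using that by force
  define R where "R = root (card I) (\<Prod>i\<in>I. t i)"
  have R: "R \<ge> 0"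
    unfolding R_def using t by (intro real_root_ge_zero prod_nonneg) (auto intro: less_imp_le)
  have normalize: "root (card I) (\<Prod>i\<in>I. z i) = root (card I) (\<Prod>i\<in>I. z i / t i) * R"
    for z :: "'a \<Rightarrow> real"
  proof -
    have "(\<Prod>i\<in>I. z i) = (\<Prod>i\<in>I. z i / t i) * (\<Prod>i\<in>I. t i)"
      unfolding prod.distrib[symmetric] using t by (intro prod.cong) (auto simp: t_ne)
    thus ?thesis by (simp add: R_def real_root_mult)
  qed
  have "root (card I) (\<Prod>i\<in>I. x i / t i) + root (card I) (\<Prod>i\<in>I. y i / t i)
          \<le> (\<Sum>i\<in>I. x i / t i) / card I + (\<Sum>i\<in>I. y i / t i) / card I"
    using x y t by (intro add_mono root_prod_le_mean[OF fin ne]) (auto intro!: divide_nonneg_pos)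
  also have "\<dots> = (\<Sum>i\<in>I. t i / t i) / card I"
    by (simp only: t_def add_divide_distrib sum.distrib)
  also have "\<dots> = (\<Sum>i\<in>I. 1) / card I"
    using t_ne by (intro arg_cong[where f = "\<lambda>u. u / card I"] sum.cong) auto
  also have "\<dots> = 1" using fin ne by simp
  finally have "(root (card I) (\<Prod>i\<in>I. x i / t i) + root (card I) (\<Prod>i\<in>I. y i / t i)) * R \<le> 1 * R"
    using R by (rule mult_right_mono)
  thus ?thesis by (simp add: normalize[of x] normalize[of y] R_def t_def distrib_right)
qed

lemma power_add_le_prod_add:
  fixes x y :: "'a \<Rightarrow> real"
  assumes fin: "finite I" and card: "card I = k" and k: "k \<ge> 1"
    and x: "\<And>i. i \<in> I \<Longrightarrow> 0 \<le> x i" and y: "\<And>i. i \<in> I \<Longrightarrow> 0 \<le> y i"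
    and "0 \<le> \<alpha>" "0 \<le> \<beta>" "0 \<le> P"
    and \<alpha>: "\<alpha> ^ k \<le> P * (\<Prod>i\<in>I. x i)" and \<beta>: "\<beta> ^ k \<le> P * (\<Prod>i\<in>I. y i)"
  shows "(\<alpha> + \<beta>) ^ k \<le> P * (\<Prod>i\<in>I. x i + y i)"
proof -
  have ne: "I \<noteq> {}" using card k by auto
  have le_root: "\<gamma> \<le> root k P * root k Q" if "0 \<le> \<gamma>" "\<gamma> ^ k \<le> P * Q" for \<gamma> Q
  proof -
    have "\<gamma> = root k (\<gamma> ^ k)" using k that(1) by (simp add: real_root_power_cancel)
    also have "\<dots> \<le> root k (P * Q)" using k that(2) by simp
    finally show ?thesis by (simp add: real_root_mult)
  qed
  have "\<alpha> \<le> root k P * root k (\<Prod>i\<in>I. x i)" using le_root \<open>0 \<le> \<alpha>\<close> \<alpha> .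
  moreover have "\<beta> \<le> root k P * root k (\<Prod>i\<in>I. y i)" using le_root \<open>0 \<le> \<beta>\<close> \<beta> .
  moreover have "root k P * (root k (\<Prod>i\<in>I. x i) + root k (\<Prod>i\<in>I. y i))
                   \<le> root k P * root k (\<Prod>i\<in>I. x i + y i)"
    using root_prod_add_ge[of I x y] fin ne x y card \<open>0 \<le> P\<close>
    by (intro mult_left_mono) (auto simp: real_root_ge_zero)
  ultimately have "\<alpha> + \<beta> \<le> root k (P * (\<Prod>i\<in>I. x i + y i))"
    by (simp add: real_root_mult distrib_left)
  hence "(\<alpha> + \<beta>) ^ k \<le> root k (P * (\<Prod>i\<in>I. x i + y i)) ^ k"
    using \<open>0 \<le> \<alpha>\<close> \<open>0 \<le> \<beta>\<close> by (intro power_mono) auto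
  also have "\<dots> = P * (\<Prod>i\<in>I. x i + y i)"
    using k x y \<open>0 \<le> P\<close> by (simp add: prod_nonneg add_nonneg_nonneg)
  finally show ?thesis .
qed

section \<open>Shearer's lemma\<close>

definition trace_family :: "'a set set \<Rightarrow> 'a set \<Rightarrow> 'a set set" where
  "trace_family F A = (\<lambda>S. S \<inter> A) ` F"

lemma trace_family_mono: "F' \<subseteq> F \<Longrightarrow> trace_family F' A \<subseteq> trace_family F A"
  unfolding trace_family_def by (rule image_mono)

lemma trace_family_Diff_outside:
  "v \<notin> A \<Longrightarrow> trace_family ((\<lambda>S. S - {v}) ` F) A = trace_family F A"
  unfolding trace_family_def image_image by (rule image_cong) auto

lemma card_split_on_element:
  assumes "finite F"
  shows "card F = card {S\<in>F. v \<notin> S} + card ((\<lambda>S. S - {v}) ` {S\<in>F. v \<in> S})"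
proof -
  have "inj_on (\<lambda>S. S - {v}) {S\<in>F. v \<in> S}" by (auto simp: inj_on_def)
  hence "card ((\<lambda>S. S - {v}) ` {S\<in>F. v \<in> S}) = card {S\<in>F. v \<in> S}" by (rule card_image)
  moreover have "card F = card ({S\<in>F. v \<notin> S} \<union> {S\<in>F. v \<in> S})" by (rule arg_cong[where f = card]) auto
  ultimately show ?thesis using assms by (simp add: card_Un_disjoint disjoint_iff)
qed

lemma card_trace_family_split_le:
  assumes "finite F" "v \<in> A"
  shows "card (trace_family {S\<in>F. v \<notin> S} A) + card (trace_family ((\<lambda>S. S - {v}) ` {S\<in>F. v \<in> S}) A)
           \<le> card (trace_family F A)"
proof -
  let ?T0 = "trace_family {S\<in>F. v \<notin> S} A" and ?T1 = "trace_family ((\<lambda>S. S - {v}) ` {S\<in>F. v \<in> S}) A"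
  have "?T0 \<subseteq> trace_family F A" by (rule trace_family_mono) auto
  moreover have "insert v ` ?T1 \<subseteq> trace_family F A"
  proof
    fix T assume "T \<in> insert v ` ?T1"
    then obtain S where "S \<in> F" "v \<in> S" "T = insert v ((S - {v}) \<inter> A)"
      unfolding trace_family_def by auto
    moreover have "insert v ((S - {v}) \<inter> A) = S \<inter> A" using \<open>v \<in> A\<close> \<open>v \<in> S\<close> by auto
    ultimately show "T \<in> trace_family F A" unfolding trace_family_def by auto
  qed
  ultimately have sub: "?T0 \<union> insert v ` ?T1 \<subseteq> trace_family F A" by blast
  have "inj_on (insert v) ?T1" unfolding trace_family_def by (auto simp: inj_on_def)
  hence "card (insert v ` ?T1) = card ?T1" by (rule card_image)
  moreover have "?T0 \<inter> insert v ` ?T1 = {}" unfolding trace_family_def by auto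
  moreover have "finite ?T0" "finite ?T1" using \<open>finite F\<close> unfolding trace_family_def by auto
  ultimately have "card ?T0 + card ?T1 = card (?T0 \<union> insert v ` ?T1)" by (simp add: card_Un_disjoint)
  also have "\<dots> \<le> card (trace_family F A)"
    using sub \<open>finite F\<close> by (intro card_mono) (auto simp: trace_family_def)
  finally show ?thesis .
qed

lemma prod_le_prod_diff_mult_prod:
  fixes c d :: "'a \<Rightarrow> real"
  assumes "finite J" "I \<subseteq> J" "\<And>j. j \<in> J - I \<Longrightarrow> d j \<le> c j" "\<And>j. j \<in> J \<Longrightarrow> 0 \<le> d j"
  shows "(\<Prod>j\<in>J. d j) \<le> (\<Prod>j\<in>J - I. c j) * (\<Prod>j\<in>I. d j)"
proof -
  have "(\<Prod>j\<in>J. d j) = (\<Prod>j\<in>J - I. d j) * (\<Prod>j\<in>I. d j)"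
    using prod.subset_diff[OF assms(2,1)] by simp
  also have "\<dots> \<le> (\<Prod>j\<in>J - I. c j) * (\<Prod>j\<in>I. d j)"
    using assms by (intro mult_right_mono prod_mono prod_nonneg) auto
  finally show ?thesis .
qed

lemma shearer_lemma:
  fixes G :: "'b \<Rightarrow> 'a set"
  assumes "finite V" "finite J" "k \<ge> 1" "\<And>v. v \<in> V \<Longrightarrow> card {j\<in>J. v \<in> G j} = k"
    and "F \<subseteq> Pow V"
  shows "real (card F) ^ k \<le> (\<Prod>j\<in>J. real (card (trace_family F (G j))))"
  using assms
proof (induction V arbitrary: F rule: finite_induct)
  case empty
  hence "F = {} \<or> F = {{}}" by auto
  thus ?case using empty.prems by (auto simp: trace_family_def power_0_left)
next
  case (insert v V F)
  have "finite F" using insert.hyps(1) insert.prems(4) by (meson finite_Pow_iff finite_insert finite_subset)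
  define F0 where "F0 = {S\<in>F. v \<notin> S}"
  define F1 where "F1 = (\<lambda>S. S - {v}) ` {S\<in>F. v \<in> S}"
  define a where "a j = real (card (trace_family F0 (G j)))" for j
  define b where "b j = real (card (trace_family F1 (G j)))" for j
  define c where "c j = real (card (trace_family F (G j)))" for j
  define I where "I = {j\<in>J. v \<in> G j}"
  \<comment> \<open>On the k sets G j containing v the traces of F0 and F1 add up, on the others both are
     bounded by the trace of F; the geometric mean over the former then closes the induction.\<close>
  have "F0 \<subseteq> Pow V" "F1 \<subseteq> Pow V" using insert.prems(4) unfolding F0_def F1_def by auto
  hence IH: "real (card F0) ^ k \<le> (\<Prod>j\<in>J. a j)" "real (card F1) ^ k \<le> (\<Prod>j\<in>J. b j)"
    using insert.IH[OF insert.prems(1,2)] insert.prems(3) unfolding a_def b_def by auto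
  have outside: "a j \<le> c j" "b j \<le> c j" if "j \<in> J - I" for j
  proof -
    have "v \<notin> G j" using that I_def by auto
    hence "trace_family F1 (G j) = trace_family {S\<in>F. v \<in> S} (G j)"
      unfolding F1_def by (rule trace_family_Diff_outside)
    hence "trace_family F0 (G j) \<subseteq> trace_family F (G j)" "trace_family F1 (G j) \<subseteq> trace_family F (G j)"
      unfolding F0_def by (simp_all add: trace_family_mono)
    thus "a j \<le> c j" "b j \<le> c j"
      unfolding a_def b_def c_def using \<open>finite F\<close> by (auto intro!: card_mono simp: trace_family_def)
  qed
  have inside: "a j + b j \<le> c j" if "j \<in> I" for j
    using card_trace_family_split_le[OF \<open>finite F\<close>, of v "G j"] that
    unfolding a_def b_def c_def F0_def F1_def I_def by simp
  define P where "P = (\<Prod>j\<in>J - I. c j)"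
  have "P \<ge> 0" unfolding P_def c_def by (simp add: prod_nonneg)
  have "I \<subseteq> J" unfolding I_def by auto
  note bound_outside = prod_le_prod_diff_mult_prod[OF insert.prems(1) \<open>I \<subseteq> J\<close>, of _ c, folded P_def]
  have "real (card F) ^ k = (real (card F0) + real (card F1)) ^ k"
    using card_split_on_element[OF \<open>finite F\<close>, of v] unfolding F0_def F1_def by simp
  also have "\<dots> \<le> P * (\<Prod>j\<in>I. a j + b j)"
  proof (rule power_add_le_prod_add)
    show "finite I" "card I = k" using insert.prems(1,3) I_def by auto
    show "real (card F0) ^ k \<le> P * (\<Prod>j\<in>I. a j)"
      using IH(1) bound_outside[of a] outside(1) by (force simp: a_def)
    show "real (card F1) ^ k \<le> P * (\<Prod>j\<in>I. b j)"
      using IH(2) bound_outside[of b] outside(2) by (force simp: b_def)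
  qed (use insert.prems(2) \<open>P \<ge> 0\<close> in \<open>auto simp: a_def b_def\<close>)
  also have "\<dots> \<le> P * (\<Prod>j\<in>I. c j)"
    using inside \<open>P \<ge> 0\<close> by (intro mult_left_mono prod_mono) (auto simp: a_def b_def)
  also have "\<dots> = (\<Prod>j\<in>J. c j)"
    unfolding P_def using prod.subset_diff[OF \<open>I \<subseteq> J\<close> insert.prems(1), of c] by simp
  finally show ?case unfolding c_def .
qed

section \<open>Sparse paving matroids\<close>

lemma finite_indep_cards: "finite X \<Longrightarrow> finite {card I | I. I \<subseteq> X \<and> indep \<B> I}"
  by (rule finite_subset[of _ "card ` Pow X"]) auto

lemma card_le_mrank: "finite X \<Longrightarrow> I \<subseteq> X \<Longrightarrow> indep \<B> I \<Longrightarrow> card I \<le> mrank \<B> X"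
  unfolding mrank_def by (rule Max_ge[OF finite_indep_cards]) auto

lemma mrank_attained:
  assumes "finite X" "\<B> \<noteq> {}"
  obtains I where "I \<subseteq> X" "indep \<B> I" "card I = mrank \<B> X"
proof -
  have "indep \<B> {}" using assms(2) unfolding indep_def by auto
  hence "{card I | I. I \<subseteq> X \<and> indep \<B> I} \<noteq> {}" by blast
  from Max_in[OF finite_indep_cards[OF assms(1)] this] show thesis
    using that unfolding mrank_def by auto
qed

lemma indep_in_bases_if_card_ge:
  assumes "matroid_bases E \<B>" "\<forall>B\<in>\<B>. card B = r" "indep \<B> I" "r \<le> card I"
  shows "I \<in> \<B>"
proof -
  obtain B where B: "B \<in> \<B>" "I \<subseteq> B" using assms(3) unfolding indep_def by auto
  have "finite B" using assms(1) B(1) unfolding matroid_bases_def by (meson PowD finite_subset subsetD)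
  hence "I = B" using B assms(2,4) by (intro card_seteq) auto
  thus ?thesis using B by simp
qed

lemma sparse_paving_nonbases_eq:
  assumes mb: "matroid_bases E \<B>" and rank: "\<forall>B\<in>\<B>. card B = r" and sp: "sparse_paving E r \<B>"
    and Y: "Y \<subseteq> E" "r = Suc (card Y)" and ab: "a \<in> E - Y" "b \<in> E - Y"
    and nonbases: "insert a Y \<notin> \<B>" "insert b Y \<notin> \<B>"
  shows "a = b"
proof (rule ccontr)
  \<comment> \<open>Adding b to the hyperplane \<open>insert a Y\<close> raises its rank to r, so it then contains a
     basis I; exchanging c out of the basis \<open>insert c Y \<supseteq> Y\<close> against I makes \<open>insert a Y\<close>
     or \<open>insert b Y\<close> a basis.\<close>
  assume "a \<noteq> b"
  have "finite E" using mb unfolding matroid_bases_def by auto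
  hence "finite Y" using Y(1) finite_subset by blast
  have "insert a Y \<subseteq> E" "card (insert a Y) = r" using ab Y \<open>finite Y\<close> by auto
  hence "circuit E \<B> (insert a Y)" "hyperplane E \<B> (insert a Y)"
    using sp nonbases(1) unfolding sparse_paving_def by blast+
  have "indep \<B> Y"
    using \<open>circuit E \<B> (insert a Y)\<close> ab unfolding circuit_def by (auto simp: psubset_insert_iff)
  then obtain B0 where B0: "B0 \<in> \<B>" "Y \<subseteq> B0" unfolding indep_def by auto
  have "finite B0" using mb B0(1) unfolding matroid_bases_def by (meson PowD finite_subset subsetD)
  hence "card (B0 - Y) = 1" using B0 rank Y(2) \<open>finite Y\<close> by (simp add: card_Diff_subset)
  then obtain c where c: "B0 - Y = {c}" by (rule card_1_singletonE)
  hence B0_eq: "B0 = insert c Y" "c \<notin> Y" using B0(2) by auto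
  have "c \<noteq> a" "c \<noteq> b" using B0(1) nonbases B0_eq(1) by auto
  have "mrank \<B> (insert a Y) < mrank \<B> (insert b (insert a Y))"
    using \<open>hyperplane E \<B> (insert a Y)\<close> ab \<open>a \<noteq> b\<close> unfolding hyperplane_def flat_def by auto
  moreover have "card Y \<le> mrank \<B> (insert a Y)"
    using \<open>finite Y\<close> \<open>indep \<B> Y\<close> by (intro card_le_mrank) auto
  moreover obtain I where I: "I \<subseteq> insert b (insert a Y)" "indep \<B> I"
    "card I = mrank \<B> (insert b (insert a Y))"
    using mrank_attained[of "insert b (insert a Y)" \<B>] \<open>finite Y\<close> B0(1) by blast
  ultimately have "I \<in> \<B>" using indep_in_bases_if_card_ge[OF mb rank] Y(2) by simp
  moreover have "c \<in> B0 - I" using I(1) B0_eq \<open>c \<noteq> a\<close> \<open>c \<noteq> b\<close> by auto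
  moreover have "\<forall>B1\<in>\<B>. \<forall>B2\<in>\<B>. \<forall>x\<in>B1 - B2. \<exists>y\<in>B2 - B1. insert y (B1 - {x}) \<in> \<B>"
    using mb unfolding matroid_bases_def by blast
  ultimately obtain y where "y \<in> I - B0" "insert y (B0 - {c}) \<in> \<B>"
    using B0(1) by blast
  moreover have "B0 - {c} = Y" using B0_eq by auto
  ultimately show False using I(1) B0(2) nonbases by auto
qed

definition sparse_paving_matroids :: "'a set \<Rightarrow> nat \<Rightarrow> 'a set set set" where
  "sparse_paving_matroids E r =
     {\<B>. matroid_bases E \<B> \<and> (\<forall>B\<in>\<B>. card B = r) \<and> sparse_paving E r \<B>}"

lemma supersets_card_Suc_eq_image_insert:
  assumes "finite E" "Y \<subseteq> E"
  shows "{X. X \<subseteq> E \<and> card X = Suc (card Y) \<and> Y \<subseteq> X} = (\<lambda>x. insert x Y) ` (E - Y)"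
proof
  have "finite Y" using assms finite_subset by blast
  show "(\<lambda>x. insert x Y) ` (E - Y) \<subseteq> {X. X \<subseteq> E \<and> card X = Suc (card Y) \<and> Y \<subseteq> X}"
    using assms(2) \<open>finite Y\<close> by auto
  show "{X. X \<subseteq> E \<and> card X = Suc (card Y) \<and> Y \<subseteq> X} \<subseteq> (\<lambda>x. insert x Y) ` (E - Y)"
  proof
    fix X assume X: "X \<in> {X. X \<subseteq> E \<and> card X = Suc (card Y) \<and> Y \<subseteq> X}"
    hence "finite X" using assms(1) finite_subset by blast
    hence "card (X - Y) = 1" using X \<open>finite Y\<close> by (simp add: card_Diff_subset)
    then obtain x where "X - Y = {x}" by (rule card_1_singletonE)
    hence "X = insert x Y" "x \<in> E - Y" using X by auto
    thus "X \<in> (\<lambda>x. insert x Y) ` (E - Y)" by blast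
  qed
qed

lemma card_subsets_card_pred:
  assumes "finite X" "card X = r" "1 \<le> r"
  shows "card {Y. Y \<subseteq> X \<and> card Y = r - 1} = r"
  using n_subsets[OF assms(1)] binomial_symmetric[of "r - 1" r] assms by simp

lemma card_family_subsingletons_le:
  assumes "finite A" "\<And>T. T \<in> \<T> \<Longrightarrow> T \<subseteq> A \<and> (\<forall>x\<in>T. \<forall>y\<in>T. x = y)"
  shows "card \<T> \<le> Suc (card A)"
proof -
  have "\<T> \<subseteq> insert {} ((\<lambda>x. {x}) ` A)"
  proof
    fix T assume "T \<in> \<T>"
    show "T \<in> insert {} ((\<lambda>x. {x}) ` A)"
    proof (cases "T = {}")
      case False
      then obtain x where "x \<in> T" by blast
      hence "T = {x}" "x \<in> A" using assms(2)[OF \<open>T \<in> \<T>\<close>] by blast+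
      thus ?thesis by blast
    qed simp
  qed
  hence "card \<T> \<le> card (insert {} ((\<lambda>x. {x}) ` A))" using assms(1) by (intro card_mono) auto
  also have "\<dots> \<le> Suc (card ((\<lambda>x. {x}) ` A))" by (simp add: card_insert_if assms(1))
  also have "\<dots> \<le> Suc (card A)" by (simp add: card_image_le assms(1))
  finally show ?thesis .
qed

lemma sparse_paving_nonbases_in_star_eq:
  assumes "finite E" "Y \<subseteq> E" "\<B> \<in> sparse_paving_matroids E (Suc (card Y))"
    and "X \<in> {X. X \<subseteq> E \<and> card X = Suc (card Y) \<and> Y \<subseteq> X} - \<B>"
    and "X' \<in> {X. X \<subseteq> E \<and> card X = Suc (card Y) \<and> Y \<subseteq> X} - \<B>"
  shows "X = X'"
proof -
  note star = supersets_card_Suc_eq_image_insert[OF assms(1,2)]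
  obtain a where a: "a \<in> E - Y" "X = insert a Y" using assms(4) unfolding star by auto
  obtain b where b: "b \<in> E - Y" "X' = insert b Y" using assms(5) unfolding star by auto
  have "matroid_bases E \<B>" "\<forall>B\<in>\<B>. card B = Suc (card Y)" "sparse_paving E (Suc (card Y)) \<B>"
    using assms(3) unfolding sparse_paving_matroids_def by auto
  moreover have "insert a Y \<notin> \<B>" "insert b Y \<notin> \<B>" using a b assms(4,5) by auto
  ultimately have "a = b" using sparse_paving_nonbases_eq[OF _ _ _ assms(2) refl a(1) b(1)] by blast
  thus ?thesis using a b by simp
qed

lemma card_sparse_paving_matroids_power_le:
  assumes finE: "finite E" and r: "1 \<le> r" "r \<le> card E"
  shows "real (card (sparse_paving_matroids E r)) ^ r
           \<le> (real (card E) - real r + 2) ^ (card E choose (r - 1))"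
proof -
  define V where "V = {X. X \<subseteq> E \<and> card X = r}"
  define J where "J = {Y. Y \<subseteq> E \<and> card Y = r - 1}"
  define G where "G Y = {X\<in>V. Y \<subseteq> X}" for Y
  define F where "F = (\<lambda>\<B>. V - \<B>) ` sparse_paving_matroids E r"
  have "\<B> \<subseteq> V" if "\<B> \<in> sparse_paving_matroids E r" for \<B>
    using that unfolding sparse_paving_matroids_def matroid_bases_def V_def by auto
  hence "inj_on (\<lambda>\<B>. V - \<B>) (sparse_paving_matroids E r)" by (intro inj_onI) blast
  hence card_F: "card F = card (sparse_paving_matroids E r)" unfolding F_def by (rule card_image)
  have "finite V" "finite J" unfolding V_def J_def using finE by auto
  have cover: "card {Y\<in>J. X \<in> G Y} = r" if "X \<in> V" for X
  proof -
    have "{Y\<in>J. X \<in> G Y} = {Y. Y \<subseteq> X \<and> card Y = r - 1}"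
      using that unfolding J_def G_def V_def by auto
    moreover have "finite X" using that finE unfolding V_def by (auto intro: finite_subset)
    ultimately show ?thesis using card_subsets_card_pred r(1) that unfolding V_def by auto
  qed
  have trace: "real (card (trace_family F (G Y))) \<le> real (card E) - real r + 2" if "Y \<in> J" for Y
  proof -
    have Y: "Y \<subseteq> E" "r = Suc (card Y)" using that r(1) unfolding J_def by auto
    hence G_eq: "G Y = {X. X \<subseteq> E \<and> card X = Suc (card Y) \<and> Y \<subseteq> X}" unfolding G_def V_def by auto
    have "card (trace_family F (G Y)) \<le> Suc (card (G Y))"
    proof (rule card_family_subsingletons_le)
      show "finite (G Y)" using \<open>finite V\<close> unfolding G_def by simp
      fix T assume "T \<in> trace_family F (G Y)"
      then obtain \<B> where \<B>: "\<B> \<in> sparse_paving_matroids E r" "T = G Y - \<B>"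
        unfolding trace_family_def F_def G_def by auto
      show "T \<subseteq> G Y \<and> (\<forall>X\<in>T. \<forall>X'\<in>T. X = X')"
      proof (intro conjI ballI)
        fix X X' assume "X \<in> T" "X' \<in> T"
        thus "X = X'" using \<B> Y(2) G_eq by (intro sparse_paving_nonbases_in_star_eq[OF finE Y(1)]) auto
      qed (use \<B>(2) in blast)
    qed
    also have "card (G Y) \<le> card (E - Y)"
      unfolding G_eq supersets_card_Suc_eq_image_insert[OF finE Y(1)]
      by (rule card_image_le) (use finE in simp)
    also have "card (E - Y) = card E - (r - 1)"
      using Y finE by (simp add: card_Diff_subset finite_subset)
    finally show ?thesis using r by linarith
  qed
  have "real (card F) ^ r \<le> (\<Prod>Y\<in>J. real (card (trace_family F (G Y))))"
    by (rule shearer_lemma[OF \<open>finite V\<close> \<open>finite J\<close> r(1) cover]) (auto simp: F_def)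
  also have "\<dots> \<le> (\<Prod>Y\<in>J. real (card E) - real r + 2)" using trace by (intro prod_mono) auto
  also have "\<dots> = (real (card E) - real r + 2) ^ (card E choose (r - 1))"
    using n_subsets[OF finE] unfolding J_def by simp
  finally show ?thesis unfolding card_F .
qed

lemma card_sparse_paving_matroids_rank_0_le: "finite E \<Longrightarrow> card (sparse_paving_matroids E 0) \<le> 1"
proof -
  assume "finite E"
  have "sparse_paving_matroids E 0 \<subseteq> {{{}}}"
  proof
    fix \<B> assume "\<B> \<in> sparse_paving_matroids E 0"
    hence "\<B> \<subseteq> Pow E" "\<B> \<noteq> {}" "\<forall>B\<in>\<B>. card B = 0"
      unfolding sparse_paving_matroids_def matroid_bases_def by auto
    have "B = {}" if "B \<in> \<B>" for B
    proof -
      have "finite B" using that \<open>\<B> \<subseteq> Pow E\<close> \<open>finite E\<close> finite_subset by blast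
      thus ?thesis using that \<open>\<forall>B\<in>\<B>. card B = 0\<close> by auto
    qed
    hence "\<B> = {{}}" using \<open>\<B> \<noteq> {}\<close> by blast
    thus "\<B> \<in> {{{}}}" by simp
  qed
  hence "card (sparse_paving_matroids E 0) \<le> card {{{}} :: 'a set set}" by (intro card_mono) auto
  thus ?thesis by simp
qed

lemma times_binomial_eq_pred:
  assumes "1 \<le> r" "r \<le> n"
  shows "r * (n choose r) = (n - r + 1) * (n choose (r - 1))"
proof -
  obtain q where q: "r = Suc q" using assms(1) by (cases r) auto
  have "Suc q * (n choose Suc q) = (n - q) * (n choose q)"
    using binomial_absorption[of q n] binomial_absorb_comp[of n q] by simp
  moreover have "n - q = n - r + 1" using q assms(2) by simp
  ultimately show ?thesis using q by simp
qed

lemma log_le_of_power_le: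
  fixes x L :: real
  assumes "1 < b" "0 < x" "0 < L" "0 < r" "x ^ r \<le> L ^ m"
  shows "log b x \<le> m / r * log b L"
proof -
  have "r * log b x \<le> m * log b L"
    using assms by (simp flip: log_nat_power)
  thus ?thesis using assms(4) by (simp add: field_simps)
qed

theorem theorem1p2:
  fixes n r :: nat
  assumes "r \<le> n"
  shows "log 2 (real (s n r))
           \<le> 1 / (real n - real r + 1) * real (n choose r) * log 2 (real n - real r + 2)"
proof -
  have s_eq: "s n r = card (sparse_paving_matroids {1..n} r)"
    by (simp add: s_def sparse_paving_matroids_def)
  have rhs_nonneg: "0 \<le> 1 / (real n - real r + 1) * real (n choose r) * log 2 (real n - real r + 2)"
    using assms by simp
  consider "s n r = 0" | "r = 0" "s n r \<noteq> 0" | "s n r > 0" "r \<ge> 1" by linarith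
  then show ?thesis
  proof cases
    case 2
    hence "s n r \<le> 1" using card_sparse_paving_matroids_rank_0_le[of "{1..n}"] s_eq by simp
    hence "s n r = 1" using 2 by simp
    thus ?thesis using rhs_nonneg by simp
  next
    case 3
    have "real (s n r) ^ r \<le> (real n - real r + 2) ^ (n choose (r - 1))"
      using card_sparse_paving_matroids_power_le[of "{1..n}" r] 3 assms s_eq by simp
    hence "log 2 (real (s n r)) \<le> (n choose (r - 1)) / r * log 2 (real n - real r + 2)"
      using 3 assms by (intro log_le_of_power_le) auto
    also have "real (n choose (r - 1)) / r = 1 / (real n - real r + 1) * real (n choose r)"
      using arg_cong[OF times_binomial_eq_pred[OF 3(2) assms], of real] 3 assms
      by (simp add: of_nat_diff field_simps)
    finally show ?thesis .
  qed (use rhs_nonneg in \<open>simp add: log_def\<close>) \<comment> \<open>\<open>log 2 0 = 0\<close>\<close>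
qed

end
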